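(* Let $V$ be a finite set of variables and let $D_{\mathit{dag}}$ be the ABA framework defined in the context. For each semantics $\sigma\in\{\text{complete},\text{preferred},\text{stable}\}$, $$\{(V,\{(x,y)\mid \mathit{arr}_{xy}\in S\})\mid S\in\sigma(D_{\mathit{dag}})\}=\{G\mid G \text{ is a directed acyclic graph with node set } V\}.$$
   Context: Assumption-based argumentation (ABA). An ABA framework (ABAF) is a tuple $D=(\mathcal L,\mathcal R,\mathcal A,\overline{\cdot})$ where $\mathcal L$ is a set of sentences, $\mathcal R$ is a set of rules $a_0\leftarrow a_1,\dots,a_n$ ($n\ge 0$, $a_i\in\mathcal L$; head $a_0$, body $\{a_1,\dots,a_n\}$), $\mathcal A\subseteq\mathcal L$ is a set of assumptions and $\overline{\cdot}:\mathcal A\to\mathcal L$ is the contrary function. For $S\subseteq\mathcal A$ and $q\in\mathcal L$, $S\vdash q$ if there is a finite rooted labelled tree whose root is labelled $q$, whose set of leaf labels is $S$ or $S\cup\{\top\}$, and in which every inner node is labelled $\mathrm{head}(r)$ for some $r\in\mathcal R$ and has exactly $|\mathrm{body}(r)|$ children labelled by the distinct elements of $\mathrm{body}(r)$ (or a single child $\top$ if the body is empty). $S$ attacks $T\subseteq\mathcal A$ if there are $S'\subseteq S$ and $a\in T$ with $S'\vdash\overline a$. $S$ is conflict-free if it does not attack itself; $S$ defends $T$ if $S$ attacks every set of assumptions that attacks $T$; $S$ is admissible if it is conflict-free and defends itself; complete if admissible and it contains every assumption set it defends; preferred if it is $\subseteq$-maximal among complete sets; stable if it is admissible and attacks $\{a\}$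 for every $a\in\mathcal A\setminus S$. $\sigma(D)$ denotes the set of $\sigma$-extensions. The framework $D_{\mathit{dag}}$. Let $V$ be a finite set of variables. Let $\mathcal A_{\mathit{arr}}=\{\mathit{arr}_{xy}\mid x,y\in V,x\ne y\}$ (the assumption $\mathit{arr}_{xy}$ stands for the arrow $(x,y)$), and for each unordered pair $\{x,y\}$ of distinct variables let $\mathit{noe}_{xy}=\mathit{noe}_{yx}$ be a single assumption ("no edge between $x$ and $y$"). $D_{\mathit{dag}}$ has assumptions $\mathcal A_{\mathit{dag}}=\mathcal A_{\mathit{arr}}\cup\{\mathit{noe}_{xy}\}$, each assumption $a$ has its own distinct contrary $\overline a$ (a fresh sentence), and the rules are: (i) $\overline a\leftarrow b$ for all distinct $a,b\in\{\mathit{arr}_{xy},\mathit{arr}_{yx},\mathit{noe}_{xy}\}$, for all distinct $x,y\in V$; (ii) for each sequence $x_1\dots x_k$ of variables with consecutive elements distinct and $x_1=x_k$, and each $1\le i<k$, the rule $\overline{\mathit{arr}_{x_ix_{i+1}}}\leftarrow \mathit{arr}_{x_1x_2},\dots,\mathit{arr}_{x_{k-1}x_k}$. *)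

theory Defs
  imports Main
begin

type_synonym 's rule = "'s \<times> 's set"

text \<open>derives R A S q: there is a finite rooted labelled tree with root q whose set of
leaf labels is S or S together with the top symbol; the top leaf (for empty bodies)
is not recorded in S.\<close>
inductive derives :: "'s rule set \<Rightarrow> 's set \<Rightarrow> 's set \<Rightarrow> 's \<Rightarrow> bool"
  for R :: "'s rule set" and A :: "'s set" where
  leaf: "a \<in> A \<Longrightarrow> derives R A {a} a"
| node: "(h, B) \<in> R \<Longrightarrow> finite B \<Longrightarrow> (\<forall>b\<in>B. derives R A (Sb b) b)
          \<Longrightarrow> derives R A (\<Union>b\<in>B. Sb b) h"

definition attacks :: "'s rule set \<Rightarrow> 's set \<Rightarrow> ('s \<Rightarrow> 's) \<Rightarrow> 's set \<Rightarrow> 's set \<Rightarrow> bool" where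
  "attacks R A ctr S T \<longleftrightarrow> (\<exists>S'\<subseteq>S. \<exists>a\<in>T. derives R A S' (ctr a))"

definition conflict_free :: "'s rule set \<Rightarrow> 's set \<Rightarrow> ('s \<Rightarrow> 's) \<Rightarrow> 's set \<Rightarrow> bool" where
  "conflict_free R A ctr S \<longleftrightarrow> \<not> attacks R A ctr S S"

definition defends :: "'s rule set \<Rightarrow> 's set \<Rightarrow> ('s \<Rightarrow> 's) \<Rightarrow> 's set \<Rightarrow> 's set \<Rightarrow> bool" where
  "defends R A ctr S T \<longleftrightarrow> (\<forall>U. U \<subseteq> A \<longrightarrow> attacks R A ctr U T \<longrightarrow> attacks R A ctr S U)"

definition admissible :: "'s rule set \<Rightarrow> 's set \<Rightarrow> ('s \<Rightarrow> 's) \<Rightarrow> 's set \<Rightarrow> bool" where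
  "admissible R A ctr S \<longleftrightarrow> S \<subseteq> A \<and> conflict_free R A ctr S \<and> defends R A ctr S S"

definition complete_ext :: "'s rule set \<Rightarrow> 's set \<Rightarrow> ('s \<Rightarrow> 's) \<Rightarrow> 's set \<Rightarrow> bool" where
  "complete_ext R A ctr S \<longleftrightarrow> admissible R A ctr S \<and>
     (\<forall>T. T \<subseteq> A \<longrightarrow> defends R A ctr S T \<longrightarrow> T \<subseteq> S)"

definition preferred_ext :: "'s rule set \<Rightarrow> 's set \<Rightarrow> ('s \<Rightarrow> 's) \<Rightarrow> 's set \<Rightarrow> bool" where
  "preferred_ext R A ctr S \<longleftrightarrow> complete_ext R A ctr S \<and>
     (\<forall>T. complete_ext R A ctr T \<longrightarrow> S \<subseteq> T \<longrightarrow> T = S)"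

definition stable_ext :: "'s rule set \<Rightarrow> 's set \<Rightarrow> ('s \<Rightarrow> 's) \<Rightarrow> 's set \<Rightarrow> bool" where
  "stable_ext R A ctr S \<longleftrightarrow> admissible R A ctr S \<and>
     (\<forall>a\<in>A - S. attacks R A ctr S {a})"

datatype semantics = Complete | Preferred | Stable

fun sem_ext :: "semantics \<Rightarrow> 's rule set \<Rightarrow> 's set \<Rightarrow> ('s \<Rightarrow> 's) \<Rightarrow> 's set \<Rightarrow> bool" where
  "sem_ext Complete = complete_ext"
| "sem_ext Preferred = preferred_ext"
| "sem_ext Stable = stable_ext"

text \<open>Sentences: Arr x y is the assumption arr_xy, Noe {x,y} is the single assumption
noe_xy = noe_yx, Ctr a is the (fresh, distinct) contrary of a.\<close>
datatype 'v sent = Arr 'v 'v | Noe "'v set" | Ctr "'v sent"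

definition dag_asms :: "'v set \<Rightarrow> 'v sent set" where
  "dag_asms V = {Arr x y | x y. x \<in> V \<and> y \<in> V \<and> x \<noteq> y}
              \<union> {Noe {x, y} | x y. x \<in> V \<and> y \<in> V \<and> x \<noteq> y}"

definition dag_ctr :: "'v sent \<Rightarrow> 'v sent" where
  "dag_ctr a = Ctr a"

definition cycle_seq :: "'v set \<Rightarrow> 'v list \<Rightarrow> bool" where
  "cycle_seq V xs \<longleftrightarrow> xs \<noteq> [] \<and> set xs \<subseteq> V \<and> hd xs = last xs \<and>
     (\<forall>j. Suc j < length xs \<longrightarrow> xs ! j \<noteq> xs ! Suc j)"

definition dag_rules :: "'v set \<Rightarrow> 'v sent rule set" where
  "dag_rules V =
     {(Ctr a, {b}) | a b x y. x \<in> V \<and> y \<in> V \<and> x \<noteq> y \<and>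
         a \<in> {Arr x y, Arr y x, Noe {x, y}} \<and> b \<in> {Arr x y, Arr y x, Noe {x, y}} \<and> a \<noteq> b}
   \<union> {(Ctr (Arr (xs ! i) (xs ! Suc i)), {Arr (xs ! j) (xs ! Suc j) | j. Suc j < length xs})
        | xs i. cycle_seq V xs \<and> Suc i < length xs}"

definition is_dag :: "'v set \<times> ('v \<times> 'v) set \<Rightarrow> bool" where
  "is_dag G \<longleftrightarrow> snd G \<subseteq> fst G \<times> fst G \<and> acyclic (snd G)"

end

theory Submission
  imports Defs
begin

(*
  Every rule of D_dag has a body of assumptions and a contrary as head, so an attack is
  simply a rule whose body lies in the attacking set.  For a set S of assumptions the
  pair rules forbid two of arr_xy, arr_yx, noe_xy in S, and the cycle rules forbid
  exactly the directed cycles among the arrows of S.  Hence every extension, being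
  conflict-free, yields a DAG on V.  Conversely a DAG E on V gives the set consisting of
  arr_xy for each edge and noe_xy for each non-adjacent pair: it is conflict-free and
  contains exactly one assumption about every pair, so it attacks every assumption it
  omits.  Such a set is stable, hence also complete and preferred.
*)

lemma attacks_mono:
  "attacks R A ctr S T \<Longrightarrow> S \<subseteq> S' \<Longrightarrow> T \<subseteq> T' \<Longrightarrow> attacks R A ctr S' T'"
  unfolding attacks_def by blast

lemma stable_extI:
  assumes sub: "S \<subseteq> A" and cf: "conflict_free R A ctr S"
    and attacks_rest: "\<forall>a\<in>A - S. attacks R A ctr S {a}"
  shows "stable_ext R A ctr S"
proof -
  have "attacks R A ctr S U" if "U \<subseteq> A" "attacks R A ctr U S" for U
  proof -
    obtain U' a where U': "U' \<subseteq> U" "a \<in> S" "derives R A U' (ctr a)"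
      using \<open>attacks R A ctr U S\<close> unfolding attacks_def by blast
    have "\<not> U' \<subseteq> S"
      using cf U' unfolding conflict_free_def attacks_def by blast
    then obtain b where "b \<in> U'" "b \<notin> S" by blast
    then have "attacks R A ctr S {b}" using attacks_rest U' \<open>U \<subseteq> A\<close> by blast
    then show ?thesis by (rule attacks_mono) (use \<open>b \<in> U'\<close> U' in auto)
  qed
  then show ?thesis
    using assms unfolding stable_ext_def admissible_def defends_def by blast
qed

lemma stable_ext_imp_complete_ext:
  assumes "stable_ext R A ctr S"
  shows "complete_ext R A ctr S"
proof -
  have adm: "admissible R A ctr S" and attacks_rest: "\<forall>a\<in>A - S. attacks R A ctr S {a}"
    using assms unfolding stable_ext_def by blast+
  have "a \<in> S" if T: "T \<subseteq> A" "defends R A ctr S T" and "a \<in> T" for T a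
  proof (rule ccontr)
    assume "a \<notin> S"
    then have "attacks R A ctr S {a}" using attacks_rest T(1) \<open>a \<in> T\<close> by blast
    then obtain S' where S': "S' \<subseteq> S" "derives R A S' (ctr a)"
      unfolding attacks_def by blast
    then have "attacks R A ctr S' T" using \<open>a \<in> T\<close> unfolding attacks_def by blast
    moreover have "S' \<subseteq> A" using S'(1) adm unfolding admissible_def by blast
    ultimately have "attacks R A ctr S S'" using T(2) unfolding defends_def by blast
    then have "attacks R A ctr S S" using order_refl S'(1) by (rule attacks_mono)
    then show False using adm unfolding admissible_def conflict_free_def by blast
  qed
  then show ?thesis using adm unfolding complete_ext_def by blast
qed

lemma stable_ext_imp_preferred_ext:
  assumes "stable_ext R A ctr S"
  shows "preferred_ext R A ctr S"
  unfolding preferred_ext_def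
proof (intro conjI allI impI equalityI)
  show "complete_ext R A ctr S" using assms by (rule stable_ext_imp_complete_ext)
  fix T assume T: "complete_ext R A ctr T" "S \<subseteq> T"
  then show "S \<subseteq> T" by simp
  have T_sub: "T \<subseteq> A" and T_cf: "conflict_free R A ctr T"
    using T(1) unfolding complete_ext_def admissible_def by simp_all
  show "T \<subseteq> S"
  proof
    fix a assume "a \<in> T"
    show "a \<in> S"
    proof (rule ccontr)
      assume "a \<notin> S"
      then have "attacks R A ctr S {a}"
        using assms T_sub \<open>a \<in> T\<close> unfolding stable_ext_def by blast
      then have "attacks R A ctr T T" using T(2)
        by (rule attacks_mono) (use \<open>a \<in> T\<close> in simp)
      then show False using T_cf unfolding conflict_free_def by simp
    qed
  qed
qed

lemma stable_ext_imp_sem_ext: "stable_ext R A ctr S \<Longrightarrow> sem_ext \<sigma> R A ctr S"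
  by (cases \<sigma>) (simp_all add: stable_ext_imp_complete_ext stable_ext_imp_preferred_ext)

lemma sem_ext_imp_admissible: "sem_ext \<sigma> R A ctr S \<Longrightarrow> admissible R A ctr S"
  by (cases \<sigma>) (simp_all add: complete_ext_def preferred_ext_def stable_ext_def)

definition flat_atomic :: "'s rule set \<Rightarrow> 's set \<Rightarrow> bool" where
  "flat_atomic R A \<longleftrightarrow> (\<forall>(h, B)\<in>R. h \<notin> A \<and> finite B \<and> B \<subseteq> A)"

lemma flat_atomicD:
  "flat_atomic R A \<Longrightarrow> (h, B) \<in> R \<Longrightarrow> h \<notin> A \<and> finite B \<and> B \<subseteq> A"
  unfolding flat_atomic_def by blast

lemma derives_flat_atomic_iff:
  assumes "flat_atomic R A"
  shows "derives R A S q \<longleftrightarrow> q \<in> A \<and> S = {q} \<or> (q, S) \<in> R"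
proof
  assume "derives R A S q"
  then show "q \<in> A \<and> S = {q} \<or> (q, S) \<in> R"
  proof cases
    case (node B Sb)
    have "Sb b = {b}" if "b \<in> B" for b
    proof -
      have "b \<in> A" using flat_atomicD[OF assms node(2)] that by blast
      from node(4) that have "derives R A (Sb b) b" by blast
      then show ?thesis
      proof cases
        case (node B')
        then show ?thesis using flat_atomicD[OF assms] \<open>b \<in> A\<close> by blast
      qed simp
    qed
    then have "S = B" using node(1) by simp
    then show ?thesis using node(2) by simp
  qed simp
next
  assume "q \<in> A \<and> S = {q} \<or> (q, S) \<in> R"
  then show "derives R A S q"
  proof
    assume "(q, S) \<in> R"
    then have "derives R A (\<Union>b\<in>S. {b}) q"
      by (rule derives.node) (use flat_atomicD[OF assms \<open>(q, S) \<in> R\<close>] in \<open>auto intro: derives.leaf\<close>)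
    then show ?thesis by simp
  qed (auto intro: derives.leaf)
qed

lemma attacks_flat_atomic_iff:
  assumes "flat_atomic R A" "\<forall>a\<in>T. ctr a \<notin> A"
  shows "attacks R A ctr U T \<longleftrightarrow> (\<exists>B\<subseteq>U. \<exists>a\<in>T. (ctr a, B) \<in> R)"
  using assms unfolding attacks_def by (auto simp: derives_flat_atomic_iff)

lemma not_acyclic_iff_closed_walk:
  "\<not> acyclic E \<longleftrightarrow>
     (\<exists>xs. 2 \<le> length xs \<and> hd xs = last xs \<and> (\<forall>j. Suc j < length xs \<longrightarrow> (xs ! j, xs ! Suc j) \<in> E))"
  (is "_ \<longleftrightarrow> (\<exists>xs. ?closed xs)")
proof
  assume "\<not> acyclic E"
  then obtain n f where "0 < n" "f n = f 0" "\<forall>i<n. (f i, f (Suc i)) \<in> E"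
    unfolding acyclic_def trancl_power relpow_fun_conv by metis
  then have "?closed (map f [0..<Suc n])"
    by (auto simp: hd_map last_map nth_Cons' simp del: upt_Suc)
  then show "\<exists>xs. ?closed xs" ..
next
  assume "\<exists>xs. ?closed xs"
  then obtain xs where xs: "2 \<le> length xs" "hd xs = last xs"
    "\<forall>j. Suc j < length xs \<longrightarrow> (xs ! j, xs ! Suc j) \<in> E" by blast
  have "(xs ! 0, xs ! (length xs - 1)) \<in> E ^^ (length xs - 1)"
    unfolding relpow_fun_conv using xs(3) by (intro exI[of _ "nth xs"]) auto
  moreover have "xs ! (length xs - 1) = xs ! 0"
  proof -
    have "xs \<noteq> []" using xs(1) by auto
    then show ?thesis using xs(2) by (simp add: hd_conv_nth last_conv_nth)
  qed
  ultimately have "(xs ! 0, xs ! 0) \<in> E ^^ (length xs - 1)" by simp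
  moreover have "0 < length xs - 1" using xs(1) by simp
  ultimately have "(xs ! 0, xs ! 0) \<in> E\<^sup>+" unfolding trancl_power by blast
  then show "\<not> acyclic E" unfolding acyclic_def by blast
qed

definition pair_asms :: "'v \<Rightarrow> 'v \<Rightarrow> 'v sent set" where
  "pair_asms x y = {Arr x y, Arr y x, Noe {x, y}}"

definition walk_arrows :: "'v list \<Rightarrow> 'v sent set" where
  "walk_arrows xs = {Arr (xs ! j) (xs ! Suc j) | j. Suc j < length xs}"

definition arrows :: "'v sent set \<Rightarrow> ('v \<times> 'v) set" where
  "arrows S = {(x, y). Arr x y \<in> S}"

lemma dag_asms_conv_pair_asms: "dag_asms V = (\<Union>x\<in>V. \<Union>y\<in>V - {x}. pair_asms x y)"
  unfolding dag_asms_def pair_asms_def by auto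

lemma Arr_in_dag_asms_iff [simp]: "Arr x y \<in> dag_asms V \<longleftrightarrow> x \<in> V \<and> y \<in> V \<and> x \<noteq> y"
  unfolding dag_asms_def by blast

lemma Ctr_notin_dag_asms [simp]: "Ctr a \<notin> dag_asms V"
  unfolding dag_asms_def by blast

lemma arrows_subset: "S \<subseteq> dag_asms V \<Longrightarrow> arrows S \<subseteq> V \<times> V"
  unfolding arrows_def by auto

lemma dag_rulesE:
  assumes "(h, B) \<in> dag_rules V"
  obtains (pair) x y a b where "x \<in> V" "y \<in> V" "x \<noteq> y" "a \<in> pair_asms x y" "b \<in> pair_asms x y"
      "a \<noteq> b" "h = Ctr a" "B = {b}"
    | (cycle) xs i where "cycle_seq V xs" "Suc i < length xs" "h = Ctr (Arr (xs ! i) (xs ! Suc i))"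
      "B = walk_arrows xs"
  using assms unfolding dag_rules_def pair_asms_def walk_arrows_def by blast

lemma pair_rule_in_dag_rules:
  "\<lbrakk>x \<in> V; y \<in> V; x \<noteq> y; a \<in> pair_asms x y; b \<in> pair_asms x y; a \<noteq> b\<rbrakk>
    \<Longrightarrow> (Ctr a, {b}) \<in> dag_rules V"
  unfolding dag_rules_def pair_asms_def by (intro UnI1) blast

lemma cycle_rule_in_dag_rules:
  "\<lbrakk>cycle_seq V xs; Suc i < length xs\<rbrakk>
    \<Longrightarrow> (Ctr (Arr (xs ! i) (xs ! Suc i)), walk_arrows xs) \<in> dag_rules V"
  unfolding dag_rules_def walk_arrows_def by (intro UnI2) blast

lemma finite_walk_arrows: "finite (walk_arrows xs)"
proof -
  have "finite {j. Suc j < length xs}" by (rule finite_subset[of _ "{..<length xs}"]) auto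
  then show ?thesis unfolding walk_arrows_def by simp
qed

lemma walk_arrows_subset_dag_asms:
  assumes "cycle_seq V xs"
  shows "walk_arrows xs \<subseteq> dag_asms V"
proof
  fix c assume "c \<in> walk_arrows xs"
  then obtain j where j: "c = Arr (xs ! j) (xs ! Suc j)" "Suc j < length xs"
    unfolding walk_arrows_def by blast
  then have "xs ! j \<in> set xs" "xs ! Suc j \<in> set xs" by simp_all
  then show "c \<in> dag_asms V" using assms j unfolding cycle_seq_def by auto
qed

lemma flat_atomic_dag_rules: "flat_atomic (dag_rules V) (dag_asms V)"
proof -
  have "h \<notin> dag_asms V \<and> finite B \<and> B \<subseteq> dag_asms V" if "(h, B) \<in> dag_rules V" for h B
    using that
  proof (cases rule: dag_rulesE)
    case (pair x y a b)
    then have "b \<in> dag_asms V" unfolding dag_asms_conv_pair_asms by blast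
    then show ?thesis using pair by simp
  next
    case cycle
    then show ?thesis by (simp add: finite_walk_arrows walk_arrows_subset_dag_asms)
  qed
  then show ?thesis unfolding flat_atomic_def by blast
qed

lemma attacks_dag_iff:
  "attacks (dag_rules V) (dag_asms V) dag_ctr U T \<longleftrightarrow> (\<exists>B\<subseteq>U. \<exists>a\<in>T. (Ctr a, B) \<in> dag_rules V)"
  by (simp add: attacks_flat_atomic_iff[OF flat_atomic_dag_rules] dag_ctr_def)

lemma cycle_seq_iff_closed_walk:
  assumes "S \<subseteq> dag_asms V"
  shows "cycle_seq V xs \<and> 2 \<le> length xs \<and> walk_arrows xs \<subseteq> S \<longleftrightarrow>
    2 \<le> length xs \<and> hd xs = last xs \<and> (\<forall>j. Suc j < length xs \<longrightarrow> (xs ! j, xs ! Suc j) \<in> arrows S)"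
    (is "?cycle \<longleftrightarrow> ?walk")
proof
  assume ?cycle
  then show ?walk unfolding cycle_seq_def walk_arrows_def arrows_def by blast
next
  assume walk: ?walk
  then have arrow: "xs ! j \<in> V \<and> xs ! Suc j \<in> V \<and> xs ! j \<noteq> xs ! Suc j" if "Suc j < length xs" for j
    using assms that unfolding arrows_def by auto
  have "xs ! k \<in> V" if "k < length xs" for k
  proof (cases "Suc k < length xs")
    case True
    then show ?thesis using arrow by blast
  next
    case False
    then have "k = Suc (k - 1)" "Suc (k - 1) < length xs" using walk that by auto
    then show ?thesis using arrow by metis
  qed
  then have "set xs \<subseteq> V" by (auto simp: in_set_conv_nth)
  moreover have "xs \<noteq> []" using walk by auto
  ultimately have "cycle_seq V xs" using walk arrow unfolding cycle_seq_def by blast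
  moreover have "walk_arrows xs \<subseteq> S" using walk unfolding walk_arrows_def arrows_def by blast
  ultimately show ?cycle using walk by blast
qed

lemma conflict_free_dag_iff:
  assumes "S \<subseteq> dag_asms V"
  shows "conflict_free (dag_rules V) (dag_asms V) dag_ctr S \<longleftrightarrow>
    (\<forall>x\<in>V. \<forall>y\<in>V. x \<noteq> y \<longrightarrow> (\<forall>a\<in>pair_asms x y \<inter> S. \<forall>b\<in>pair_asms x y \<inter> S. a = b))
    \<and> acyclic (arrows S)"
proof -
  let ?clash = "\<exists>x\<in>V. \<exists>y\<in>V. x \<noteq> y \<and> (\<exists>a\<in>pair_asms x y \<inter> S. \<exists>b\<in>pair_asms x y \<inter> S. a \<noteq> b)"
  let ?cycle = "\<exists>xs. cycle_seq V xs \<and> 2 \<le> length xs \<and> walk_arrows xs \<subseteq> S"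
  have cycles: "?cycle \<longleftrightarrow> \<not> acyclic (arrows S)"
    unfolding not_acyclic_iff_closed_walk cycle_seq_iff_closed_walk[OF assms] by (rule refl)
  have "(\<exists>B\<subseteq>S. \<exists>a\<in>S. (Ctr a, B) \<in> dag_rules V) \<longleftrightarrow> ?clash \<or> ?cycle"
  proof
    assume "\<exists>B\<subseteq>S. \<exists>a\<in>S. (Ctr a, B) \<in> dag_rules V"
    then obtain B a where B: "B \<subseteq> S" "a \<in> S" "(Ctr a, B) \<in> dag_rules V" by blast
    from B(3) show "?clash \<or> ?cycle"
    proof (cases rule: dag_rulesE)
      case (pair x y a' b)
      then show ?thesis using B by blast
    next
      case (cycle xs i)
      then show ?thesis using B(1) by auto
    qed
  next
    assume "?clash \<or> ?cycle"
    then show "\<exists>B\<subseteq>S. \<exists>a\<in>S. (Ctr a, B) \<in> dag_rules V"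
    proof (elim disjE bexE exE conjE IntE)
      fix x y a b
      assume "x \<in> V" "y \<in> V" "x \<noteq> y" "a \<in> pair_asms x y" "a \<in> S" "b \<in> pair_asms x y" "b \<in> S" "a \<noteq> b"
      then show ?thesis using pair_rule_in_dag_rules[of x V y a b] by blast
    next
      fix xs
      assume xs: "cycle_seq V xs" "2 \<le> length xs" "walk_arrows xs \<subseteq> S"
      then have "(Ctr (Arr (xs ! 0) (xs ! 1)), walk_arrows xs) \<in> dag_rules V"
        using cycle_rule_in_dag_rules[of V xs 0] by simp
      moreover have "Arr (xs ! 0) (xs ! 1) \<in> walk_arrows xs"
        using xs(2) unfolding walk_arrows_def by force
      ultimately show ?thesis using xs(3) by blast
    qed
  qed
  then show ?thesis unfolding conflict_free_def attacks_dag_iff using cycles by blast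
qed

lemma sem_ext_is_dag:
  assumes "sem_ext \<sigma> (dag_rules V) (dag_asms V) dag_ctr S"
  shows "is_dag (V, arrows S)"
proof -
  have "S \<subseteq> dag_asms V" "conflict_free (dag_rules V) (dag_asms V) dag_ctr S"
    using sem_ext_imp_admissible[OF assms] unfolding admissible_def by simp_all
  then show ?thesis unfolding is_dag_def by (simp add: conflict_free_dag_iff arrows_subset)
qed

definition graph_asms :: "'v set \<Rightarrow> ('v \<times> 'v) set \<Rightarrow> 'v sent set" where
  "graph_asms V E = {Arr x y | x y. (x, y) \<in> E} \<union>
     {Noe {x, y} | x y. x \<in> V \<and> y \<in> V \<and> x \<noteq> y \<and> (x, y) \<notin> E \<and> (y, x) \<notin> E}"

lemma arrows_graph_asms: "arrows (graph_asms V E) = E"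
  unfolding arrows_def graph_asms_def by blast

lemma pair_asms_inter_graph_asms:
  assumes "x \<in> V" "y \<in> V" "x \<noteq> y" "(x, y) \<notin> E \<or> (y, x) \<notin> E"
  shows "pair_asms x y \<inter> graph_asms V E =
    (if (x, y) \<in> E then {Arr x y} else if (y, x) \<in> E then {Arr y x} else {Noe {x, y}})"
  using assms unfolding pair_asms_def graph_asms_def by (auto simp: doubleton_eq_iff)

lemma graph_asms_stable_ext:
  assumes "is_dag (V, E)"
  shows "stable_ext (dag_rules V) (dag_asms V) dag_ctr (graph_asms V E)"
proof -
  let ?S = "graph_asms V E"
  have E: "E \<subseteq> V \<times> V" "acyclic E" using assms unfolding is_dag_def by simp_all
  have asym: "(x, y) \<notin> E \<or> (y, x) \<notin> E" for x y
    using E(2) unfolding acyclic_def by (meson r_into_trancl trancl_trans)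
  have sub: "?S \<subseteq> dag_asms V"
  proof
    fix c assume "c \<in> ?S"
    then consider x y where "c = Arr x y" "(x, y) \<in> E"
      | x y where "c = Noe {x, y}" "x \<in> V" "y \<in> V" "x \<noteq> y"
      unfolding graph_asms_def by blast
    then show "c \<in> dag_asms V"
    proof cases
      case (1 x y)
      then show ?thesis using E(1) asym[of x y] by auto
    next
      case (2 x y)
      then show ?thesis unfolding dag_asms_def by blast
    qed
  qed
  have single: "\<exists>b. pair_asms x y \<inter> ?S = {b}" if "x \<in> V" "y \<in> V" "x \<noteq> y" for x y
    using pair_asms_inter_graph_asms[OF that asym] by simp
  have cf: "conflict_free (dag_rules V) (dag_asms V) dag_ctr ?S"
    unfolding conflict_free_dag_iff[OF sub] arrows_graph_asms
  proof (intro conjI ballI impI E(2))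
    fix x y a a'
    assume "x \<in> V" "y \<in> V" "x \<noteq> y" and a: "a \<in> pair_asms x y \<inter> ?S" "a' \<in> pair_asms x y \<inter> ?S"
    then obtain b where "pair_asms x y \<inter> ?S = {b}" using single by blast
    then show "a = a'" using a by simp
  qed
  have attacks_rest: "attacks (dag_rules V) (dag_asms V) dag_ctr ?S {a}"
    if a: "a \<in> dag_asms V - ?S" for a
  proof -
    obtain x y where xy: "x \<in> V" "y \<in> V" "x \<noteq> y" "a \<in> pair_asms x y"
      using a unfolding dag_asms_conv_pair_asms by blast
    obtain b where "pair_asms x y \<inter> ?S = {b}" using single[OF xy(1-3)] by blast
    then have "b \<in> pair_asms x y \<inter> ?S" by simp
    then have b: "b \<in> pair_asms x y" "b \<in> ?S" "a \<noteq> b" using a by auto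
    have "(Ctr a, {b}) \<in> dag_rules V" using pair_rule_in_dag_rules[OF xy b(1,3)] .
    then show ?thesis unfolding attacks_dag_iff using b(2) by (intro exI[of _ "{b}"]) simp
  qed
  show ?thesis by (rule stable_extI[OF sub cf]) (use attacks_rest in blast)
qed

theorem proposition1:
  fixes V :: "'v set" and \<sigma> :: semantics
  assumes "finite V"
  shows "{(V, {(x, y). Arr x y \<in> S}) | S. sem_ext \<sigma> (dag_rules V) (dag_asms V) dag_ctr S}
         = {G. is_dag G \<and> fst G = V}"
proof (intro equalityI subsetI)
  fix G assume "G \<in> {(V, {(x, y). Arr x y \<in> S}) | S. sem_ext \<sigma> (dag_rules V) (dag_asms V) dag_ctr S}"
  then show "G \<in> {G. is_dag G \<and> fst G = V}"
    using sem_ext_is_dag unfolding arrows_def by auto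
next
  fix G assume "G \<in> {G. is_dag G \<and> fst G = V}"
  then obtain E where G: "G = (V, E)" "is_dag (V, E)" by (cases G) auto
  then have "sem_ext \<sigma> (dag_rules V) (dag_asms V) dag_ctr (graph_asms V E)"
    by (blast intro: stable_ext_imp_sem_ext graph_asms_stable_ext)
  then show "G \<in> {(V, {(x, y). Arr x y \<in> S}) | S. sem_ext \<sigma> (dag_rules V) (dag_asms V) dag_ctr S}"
    using arrows_graph_asms[of V E] unfolding G(1) arrows_def by blast
qed

end
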